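(* Let $n,k,t$ be integers with $1\le t<k\le n$, and let $m\ge 1$. Consider the $(n,k,t)$ Staircase-PIR scheme described in the context, used by a user who wants file $f_i$, $i\in\{1,\dots,m\}$. Then: (1) Privacy: for every set $T\subseteq\{1,\dots,n\}$ with $|T|=t$, the joint distribution of the queries $(\mathbf{q}_l)_{l\in T}$ does not depend on $i$; equivalently, if the index $i$ is a random variable $\texttt{I}$ independent of the random vectors, then $H(\texttt{I}\mid \texttt{Q}_T)=H(\texttt{I})$. (2) Universal robustness and optimality: for every $\mu$ with $k\le\mu\le n$ and every set $L\subseteq\{1,\dots,n\}$ with $|L|=\mu$, the user can compute all $\alpha'$ parts of $f_i$ from the responses of the servers in $L$ to their first $\alpha'/(\mu-t)$ sub-queries only. Hence, when waiting for any $\mu$ servers, the user downloads $\mu\alpha'/(\mu-t)$ symbols to retrieve the $\alpha'$ symbols of the file, i.e. the scheme achieves rate $$\frac{\alpha'}{\mu\,\alpha'/(\mu-t)}=1-\frac{t}{\mu}=C(t,\mu)$$ simultaneously for all $\mu\in\{k,\dots,n\}$.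
   Context: Setting: $m$ files are replicated on $n$ servers; a user wants file $f_i$ while any $t$ colluding servers must learn nothing about $i$. All arithmetic is over a finite field $GF(q)$ with $q>n$. Parameters: for $j=1,\dots,n-k+1$ let $\mu_j=n-j+1$ and $\alpha_j=\mu_j-t$ (so $\alpha_{j-1}-\alpha_j=1$; set $\alpha_0=1$). Let $\alpha=\mathrm{lcm}(\alpha_1,\dots,\alpha_{n-k})$ (with $\alpha=1$ if $n=k$) and $\alpha'=(k-t)\alpha$. Each file is split into $\alpha'$ symbols and the data is the vector $\mathbf{x}=[x_1,\dots,x_{\alpha' m}]^T\in GF(q)^{\alpha' m}$ with $f_i=[x_i,x_{m+i},\dots,x_{(\alpha'-1)m+i}]$. Let $\mathbf{e}_p$ be the $p$-th standard basis vector of $GF(q)^{\alpha' m}$ and $\mathbf{e}'_j=\mathbf{e}_{(j-1)m+i}$, so $f_i=[\mathbf{e}_1'^T\mathbf{x},\dots,\mathbf{e}_{\alpha'}'^T\mathbf{x}]$. Construction of the queries: the user draws i.i.d. random vectors uniformly from $GF(q)^{\alpha' m}$, independent of $i$. All matrices below have entries that are vectors in $GF(q)^{\alpha' m}$. Let $\mathcal{E}$ be the $\alpha_1\times(\alpha'/\alpha_1)$ matrix containing $\mathbf{e}'_1,\dots,\mathbf{e}'_{\alpha'}$ (filled column by column). For $j=1,\dots,n-k+1$ let $\mathcal{R}_j$ be a $t\times \alpha'/(\alpha_{j-1}\alpha_j)$ matrix of fresh random vectors (distinct entries are distinct independent random vectors). Let $\mathcal{M}_1=\begin{bmatrix}\mathcal{E}\\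 \mathcal{R}_1\end{bmatrix}$ (an $n\times \alpha'/\alpha_1$ matrix). For $l=1,\dots,n-k$, let $\mathcal{D}_l$ be the $\alpha_{l+1}\times \alpha'/(\alpha_l\alpha_{l+1})$ matrix obtained by taking the $(n-l+1)$-th row of the concatenation $[\mathcal{M}_1\ \mathcal{M}_2\ \cdots\ \mathcal{M}_l]$ (which has exactly $\alpha'/\alpha_l$ entries) and writing its entries into $\mathcal{D}_l$ column by column. For $j=2,\dots,n-k+1$ let $\mathcal{M}_j=\begin{bmatrix}\mathcal{D}_{j-1}\\ \mathcal{R}_j\\ \mathbf{0}\end{bmatrix}$, where $\mathbf{0}$ is a $(j-1)\times \alpha'/(\alpha_{j-1}\alpha_j)$ block of zero vectors, so that $\mathcal{M}_j$ has $n$ rows. Let $\mathcal{M}=[\mathcal{M}_1\ \mathcal{M}_2\ \cdots\ \mathcal{M}_{n-k+1}]$, an $n\times\alpha$ matrix. Let $\mathcal{V}$ be the $n\times n$ Vandermonde matrix $\mathcal{V}_{l,c}=a_l^{c-1}$ with $a_1,\dots,a_n$ distinct nonzero elements of $GF(q)$. The query matrix is $\mathcal{Q}=\mathcal{V}\mathcal{M}$; server $l$ receives the query $\mathbf{q}_l$ = row $l$ of $\mathcal{Q}$, consisting of $\alpha$ sub-queries $\mathbf{q}_{l,1},\dots,\mathbf{q}_{l,\alpha}\in GF(q)^{\alpha' m}$, and answers sub-query $c$ with the symbol $\mathbf{q}_{l,c}^T\mathbf{x}$. The rate of retrieval is the number of file symbols divided by the number of downloaded symbols; $C(t,\mu)=1-t/\mu$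 is the asymptotic capacity of PIR with $t$ colluding servers and $\mu$ responding servers. *)

theory Defs
  imports "HOL-Probability.Probability_Mass_Function"
begin

text \<open>Staircase-PIR scheme. All indices are 1-based as in the paper.
  Vectors of GF(q)^N are functions nat => 'a supported on {1..N}.\<close>

type_synonym 'a vec = "nat \<Rightarrow> 'a"

definition vecs :: "nat \<Rightarrow> ('a::zero) vec set" where
  "vecs N = {v. \<forall>p. (p < 1 \<or> N < p) \<longrightarrow> v p = 0}"

text \<open>alpha_j = mu_j - t = n - j + 1 - t for j >= 1, and alpha_0 = 1.\<close>
definition alph :: "nat \<Rightarrow> nat \<Rightarrow> nat \<Rightarrow> nat" where
  "alph n t j = (if j = 0 then 1 else n + 1 - j - t)"

definition alpha :: "nat \<Rightarrow> nat \<Rightarrow> nat \<Rightarrow> nat" where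
  "alpha n k t = Lcm (alph n t ` {1..n - k})"

definition alpha' :: "nat \<Rightarrow> nat \<Rightarrow> nat \<Rightarrow> nat" where
  "alpha' n k t = (k - t) * alpha n k t"

text \<open>number of columns of M_j\<close>
definition blkw :: "nat \<Rightarrow> nat \<Rightarrow> nat \<Rightarrow> nat \<Rightarrow> nat" where
  "blkw n k t j = alpha' n k t div (alph n t (j - 1) * alph n t j)"

text \<open>number of columns of [M_1 ... M_l]\<close>
definition catw :: "nat \<Rightarrow> nat \<Rightarrow> nat \<Rightarrow> nat \<Rightarrow> nat" where
  "catw n k t l = (if l = 0 then 0 else alpha' n k t div alph n t l)"

definition ev :: "nat \<Rightarrow> ('a::{zero,one}) vec" where
  "ev p = (\<lambda>q. if q = p then 1 else 0)"

text \<open>entry (r,c) of the matrix E: e'_j with j = (c-1) alpha_1 + r, e'_j = e_{(j-1)m+i}\<close>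
definition Eent :: "nat \<Rightarrow> nat \<Rightarrow> nat \<Rightarrow> nat \<Rightarrow> nat \<Rightarrow> nat \<Rightarrow> ('a::{zero,one}) vec" where
  "Eent n t m i r c = ev (((c - 1) * alph n t 1 + r - 1) * m + i)"

text \<open>Entry (r,c) of block M_j, given the concatenation C = [M_1 ... M_{j-1}]
  (as a function row => column => vector) and the random vectors rho
  (rho j s c = entry (s,c) of R_j).\<close>
definition Mblk :: "nat \<Rightarrow> nat \<Rightarrow> nat \<Rightarrow> nat \<Rightarrow> nat \<Rightarrow> (nat \<Rightarrow> nat \<Rightarrow> nat \<Rightarrow> ('a::{zero,one}) vec)
    \<Rightarrow> (nat \<Rightarrow> nat \<Rightarrow> 'a vec) \<Rightarrow> nat \<Rightarrow> nat \<Rightarrow> nat \<Rightarrow> 'a vec" where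
  "Mblk n k t m i \<rho> C j r c =
    (if 1 \<le> r \<and> r \<le> n \<and> 1 \<le> c \<and> c \<le> blkw n k t j then
       (if j = 1 then
          (if r \<le> alph n t 1 then Eent n t m i r c else \<rho> 1 (r - alph n t 1) c)
        else
          (if r \<le> alph n t j then C (n + 2 - j) ((c - 1) * alph n t j + r)
           else if r \<le> alph n t j + t then \<rho> j (r - alph n t j) c
           else (\<lambda>_. 0)))
     else (\<lambda>_. 0))"

text \<open>cat l = [M_1 ... M_l]; the row of cat (j-1) used in Mblk is read in
  column order, which is exactly D_{j-1} filled column by column.\<close>
primrec cat :: "nat \<Rightarrow> nat \<Rightarrow> nat \<Rightarrow> nat \<Rightarrow> nat \<Rightarrow> (nat \<Rightarrow> nat \<Rightarrow> nat \<Rightarrow> ('a::{zero,one}) vec)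
    \<Rightarrow> nat \<Rightarrow> nat \<Rightarrow> nat \<Rightarrow> 'a vec" where
  "cat n k t m i \<rho> 0 = (\<lambda>r c. (\<lambda>_. 0))"
| "cat n k t m i \<rho> (Suc l) = (\<lambda>r c.
      if c \<le> catw n k t l then cat n k t m i \<rho> l r c
      else Mblk n k t m i \<rho> (cat n k t m i \<rho> l) (Suc l) r (c - catw n k t l))"

definition Mmat :: "nat \<Rightarrow> nat \<Rightarrow> nat \<Rightarrow> nat \<Rightarrow> nat \<Rightarrow> (nat \<Rightarrow> nat \<Rightarrow> nat \<Rightarrow> ('a::{zero,one}) vec)
    \<Rightarrow> nat \<Rightarrow> nat \<Rightarrow> 'a vec" where
  "Mmat n k t m i \<rho> = cat n k t m i \<rho> (n - k + 1)"

definition query :: "nat \<Rightarrow> nat \<Rightarrow> nat \<Rightarrow> nat \<Rightarrow> nat \<Rightarrow> (nat \<Rightarrow> 'a::field)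
    \<Rightarrow> (nat \<Rightarrow> nat \<Rightarrow> nat \<Rightarrow> 'a vec) \<Rightarrow> nat \<Rightarrow> nat \<Rightarrow> 'a vec" where
  "query n k t m i a \<rho> l c = (\<lambda>p. \<Sum>r = 1..n. a l ^ (r - 1) * Mmat n k t m i \<rho> r c p)"

definition answer :: "nat \<Rightarrow> nat \<Rightarrow> nat \<Rightarrow> nat \<Rightarrow> nat \<Rightarrow> (nat \<Rightarrow> 'a::field)
    \<Rightarrow> (nat \<Rightarrow> nat \<Rightarrow> nat \<Rightarrow> 'a vec) \<Rightarrow> nat \<Rightarrow> nat \<Rightarrow> 'a vec \<Rightarrow> 'a" where
  "answer n k t m i a \<rho> l c x = (\<Sum>p = 1..alpha' n k t * m. query n k t m i a \<rho> l c p * x p)"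

text \<open>the space of all choices of the random vectors: rho j s c is entry (s,c)
  of R_j for 1<=j<=n-k+1, 1<=s<=t, 1<=c<=blkw j; all other values are fixed to 0.
  The uniform distribution on this set makes all random vectors i.i.d. uniform.\<close>
definition rand_space :: "nat \<Rightarrow> nat \<Rightarrow> nat \<Rightarrow> nat \<Rightarrow> (nat \<Rightarrow> nat \<Rightarrow> nat \<Rightarrow> ('a::zero) vec) set" where
  "rand_space n k t m = {\<rho>. \<forall>j s c. \<rho> j s c \<in> vecs (alpha' n k t * m) \<and>
      (\<not> (1 \<le> j \<and> j \<le> n - k + 1 \<and> 1 \<le> s \<and> s \<le> t \<and> 1 \<le> c \<and> c \<le> blkw n k t j)
         \<longrightarrow> \<rho> j s c = (\<lambda>_. 0))}"

end

theory Submission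
  imports Defs "HOL-Computational_Algebra.Polynomial" "HOL-Probability.Product_PMF"
begin

text \<open>Both parts rest on the invertibility of Vandermonde matrices with distinct nodes.

  Column by column, the top \<open>\<alpha>\<^sub>j\<close> rows of \<open>M\<^sub>j\<close> are
  determined by the earlier blocks, while its next \<open>t\<close> rows are fresh random vectors,
  seen by the \<open>t\<close> servers through a \<open>t \<times> t\<close> Vandermonde matrix scaled by the nonzero
  factors \<open>a\<^sub>l ^ \<alpha>\<^sub>j\<close>. Hence the random vectors can be recovered from the \<open>t\<close> queries,
  so the queries are a bijective image of the randomness onto a set of the same size
  that does not depend on \<open>i\<close>: they are uniformly distributed whatever \<open>i\<close> is.

  Decoding from \<open>\<mu>\<close> servers: put \<open>j = n + 1 - \<mu>\<close>; the first \<open>\<alpha>'/(\<mu> - t)\<close> sub-queries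
  are the columns of \<open>M\<^sub>1, \<dots>, M\<^sub>j\<close>.
  In such a column only the first \<open>\<mu>\<close> rows carry unknowns: the rows below are zero or,
  by the construction of the \<open>\<D>\<^sub>l\<close>, reappear among the top rows of a later block
  \<open>M\<^sub>b\<^sub>'\<close> with \<open>b' \<le> j\<close>. Solving the \<open>\<mu> \<times> \<mu>\<close> Vandermonde systems block by block from
  \<open>M\<^sub>j\<close> back to \<open>M\<^sub>1\<close> yields every product of an entry of \<open>M\<close> with the data, in particular
  those of the unit vectors in \<open>\<E>\<close>, which are the symbols of \<open>f\<^sub>i\<close>.\<close>

lemma vandermonde_kernel_trivial:
  fixes a :: "nat \<Rightarrow> 'a::field" and y :: "nat \<Rightarrow> 'a"
  assumes "finite L" "card L = \<mu>" "inj_on a L"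
    and "\<forall>l\<in>L. (\<Sum>r=1..\<mu>. a l ^ (r-1) * y r) = 0"
  shows "\<forall>r\<in>{1..\<mu>}. y r = 0"
proof -
  define p where "p = (\<Sum>r=1..\<mu>. monom (y r) (r-1))"
  have poly_p: "poly p x = (\<Sum>r=1..\<mu>. x ^ (r-1) * y r)" for x
    unfolding p_def poly_sum by (simp add: poly_monom mult.commute)
  have "p = 0"
  proof (rule ccontr)
    assume "p \<noteq> 0"
    hence "card {x. poly p x = 0} \<le> degree p" by (rule card_poly_roots_bound)
    moreover have "degree p \<le> \<mu> - 1" unfolding p_def
      by (rule degree_sum_le) (auto intro: order.trans[OF degree_monom_le])
    moreover have "a ` L \<subseteq> {x. poly p x = 0}" using assms(4) poly_p by auto
    hence "card (a ` L) \<le> card {x. poly p x = 0}"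
      using \<open>p \<noteq> 0\<close> poly_roots_finite by (intro card_mono) auto
    moreover have "card (a ` L) = \<mu>" using assms card_image by metis
    ultimately have "\<mu> = 0" by linarith
    thus False using \<open>p \<noteq> 0\<close> unfolding p_def by simp
  qed
  show ?thesis
  proof
    fix r assume r: "r \<in> {1..\<mu>}"
    have "coeff p (r-1) = (\<Sum>r'=1..\<mu>. if r' = r then y r' else 0)"
      unfolding p_def coeff_sum coeff_monom by (intro sum.cong) (use r in auto)
    also have "\<dots> = y r" using r by simp
    finally show "y r = 0" using \<open>p = 0\<close> by simp
  qed
qed

lemma vandermonde_kernel_trivial_below:
  fixes a :: "nat \<Rightarrow> 'a::field" and y :: "nat \<Rightarrow> 'a"
  assumes "finite L" "card L = \<mu>" "inj_on a L" "\<mu> \<le> N"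
    and "\<And>r. \<mu> < r \<Longrightarrow> r \<le> N \<Longrightarrow> y r = 0"
    and "\<forall>l\<in>L. (\<Sum>r=1..N. a l ^ (r-1) * y r) = 0"
  shows "\<forall>r\<in>{1..N}. y r = 0"
proof -
  have "(\<Sum>r=1..N. a l ^ (r-1) * y r) = (\<Sum>r=1..\<mu>. a l ^ (r-1) * y r)" for l
  proof -
    have "(\<Sum>r=1..N. a l ^ (r-1) * y r)
        = (\<Sum>r=1..\<mu>. a l ^ (r-1) * y r) + (\<Sum>r=\<mu>+1..\<mu>+(N-\<mu>). a l ^ (r-1) * y r)"
      using assms(4) by (subst sum.ub_add_nat[symmetric]) auto
    also have "(\<Sum>r=\<mu>+1..\<mu>+(N-\<mu>). a l ^ (r-1) * y r) = 0"
      by (intro sum.neutral) (use assms(5) in auto)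
    finally show ?thesis by simp
  qed
  hence "\<forall>r\<in>{1..\<mu>}. y r = 0"
    using assms(6) by (intro vandermonde_kernel_trivial[OF assms(1-3)]) simp
  thus ?thesis using assms(5) by (meson atLeastAtMost_iff not_le)
qed

lemma map_pmf_of_set_inj_onto:
  assumes "inj_on f A" "f ` A \<subseteq> B" "finite B" "card A = card B" "A \<noteq> {}"
  shows "map_pmf f (pmf_of_set A) = pmf_of_set B"
proof -
  have "finite A" using assms(1-3) finite_imageD finite_subset by blast
  have "f ` A = B" using assms card_image by (metis card_subset_eq)
  thus ?thesis using map_pmf_of_set_inj[OF assms(1,5) \<open>finite A\<close>] by simp
qed

lemma ex_decoder_on:
  assumes "\<And>x x'. x \<in> S \<Longrightarrow> x' \<in> S \<Longrightarrow> g x = g x' \<Longrightarrow> f x = f x'"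
  shows "\<exists>dec. \<forall>x\<in>S. dec (g x) = f x"
proof -
  have "f (SOME x'. x' \<in> S \<and> g x' = g x) = f x" if "x \<in> S" for x
  proof (rule someI2[of _ x])
    show "x \<in> S \<and> g x = g x" using that by simp
  qed (use that assms in blast)
  thus ?thesis by (intro exI[of _ "\<lambda>y. f (SOME x'. x' \<in> S \<and> g x' = y)"]) blast
qed

lemma sum_ev_mult:
  assumes "P \<in> S" "finite S"
  shows "(\<Sum>p\<in>S. ev P p * (x p :: 'a::field)) = x P"
proof -
  have "(\<Sum>p\<in>S. ev P p * x p) = (\<Sum>p\<in>S. if P = p then x p else 0)"
    by (rule sum.cong) (auto simp: ev_def)
  also have "\<dots> = x P" using assms by simp
  finally show ?thesis .
qed

lemma vecs_eq_PiE_dflt: "vecs N = PiE_dflt {1..N} 0 (\<lambda>_. UNIV)"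
  by (auto simp: vecs_def PiE_dflt_def not_le[symmetric])

lemma finite_vecs: "finite (vecs N :: ('a::{finite,zero}) vec set)"
  unfolding vecs_eq_PiE_dflt by (intro finite_PiE_dflt) auto

lemma zero_in_vecs: "(\<lambda>_. 0) \<in> vecs N"
  by (simp add: vecs_def)

lemma inj_uncurry3: "inj (\<lambda>f. \<lambda>(x,y,z). f x y z)"
proof (rule injI)
  fix f g :: "'a \<Rightarrow> 'b \<Rightarrow> 'c \<Rightarrow> 'd"
  assume e: "(\<lambda>(x,y,z). f x y z) = (\<lambda>(x,y,z). g x y z)"
  show "f = g"
  proof (intro ext)
    fix x y z show "f x y z = g x y z" using fun_cong[OF e, of "(x,y,z)"] by simp
  qed
qed

lemma inj_case_prod: "inj case_prod"
  by (metis curry_case_prod injI)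

lemma file_index_bounds:
  fixes q N i m :: nat
  assumes "1 \<le> q" "q \<le> N" "1 \<le> i" "i \<le> m"
  shows "1 \<le> (q-1)*m + i \<and> (q-1)*m + i \<le> N * m"
proof -
  have "(q-1)*m + i \<le> (q-1)*m + m" using assms by simp
  also have "\<dots> = q * m" using assms by (cases q) auto
  also have "\<dots> \<le> N * m" using assms by simp
  finally show ?thesis using assms by simp
qed

section \<open>The query matrix\<close>

locale staircase =
  fixes n k t :: nat
  assumes t_pos: "1 \<le> t" and t_less_k: "t < k" and k_le_n: "k \<le> n"
begin

abbreviation "J \<equiv> n - k + 1"
abbreviation "al \<equiv> alph n t"
abbreviation "AL \<equiv> alpha n k t"
abbreviation "AL' \<equiv> alpha' n k t"
abbreviation "bw \<equiv> blkw n k t"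
abbreviation "cw \<equiv> catw n k t"

lemma alph_pos: "j \<le> J \<Longrightarrow> 1 \<le> al j"
  using t_less_k k_le_n by (auto simp: alph_def)

lemma alph_pred: "2 \<le> j \<Longrightarrow> j \<le> J \<Longrightarrow> al (j-1) = al j + 1"
  using t_less_k k_le_n by (simp add: alph_def)

lemma alph_last: "al J = k - t"
  using t_less_k k_le_n by (simp add: alph_def)

lemma alph_add_t: "1 \<le> j \<Longrightarrow> j \<le> J \<Longrightarrow> al j + t = n + 1 - j"
  using t_less_k k_le_n by (simp add: alph_def)

lemma alpha_pos: "AL > 0"
proof -
  have "0 \<notin> al ` {1..n-k}"
  proof
    assume "0 \<in> al ` {1..n-k}"
    then obtain j where "j \<in> {1..n-k}" "al j = 0" by auto
    thus False using alph_pos[of j] by simp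
  qed
  moreover have "finite (al ` {1..n-k})" by simp
  ultimately have "Lcm (al ` {1..n-k}) \<noteq> 0" using Lcm_0_iff by blast
  thus ?thesis unfolding alpha_def by (metis gr0I)
qed

lemma alpha'_pos: "AL' > 0"
  using alpha_pos t_less_k by (simp add: alpha'_def)

lemma alph_dvd_alpha': "j \<le> J \<Longrightarrow> al j dvd AL'"
proof -
  assume j: "j \<le> J"
  consider "j = 0" | "j = J" | "1 \<le> j" "j < J" using j by linarith
  thus ?thesis
  proof cases
    case 3
    hence "al j dvd AL" unfolding alpha_def by (intro dvd_Lcm) auto
    thus ?thesis by (simp add: alpha'_def)
  qed (use alph_last in \<open>auto simp: alph_def alpha'_def\<close>)
qed

text \<open>The width of \<open>M\<^sub>j\<close> is an integer because consecutive \<open>\<alpha>\<^sub>j\<close> are coprime.\<close>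
lemma alph_pred_mult_dvd_alpha': "1 \<le> j \<Longrightarrow> j \<le> J \<Longrightarrow> al (j-1) * al j dvd AL'"
proof (cases "j = 1")
  case True
  thus ?thesis using alph_dvd_alpha'[of 1] by (simp add: alph_def)
next
  case False
  assume j: "1 \<le> j" "j \<le> J"
  hence "al (j-1) = Suc (al j)" using alph_pred[of j] False by simp
  hence "coprime (al (j-1)) (al j)" by simp
  thus ?thesis using alph_dvd_alpha'[of j] alph_dvd_alpha'[of "j-1"] j by (intro divides_mult) auto
qed

lemma blkw_mult: "1 \<le> j \<Longrightarrow> j \<le> J \<Longrightarrow> al (j-1) * al j * bw j = AL'"
  using alph_pred_mult_dvd_alpha' by (simp add: blkw_def)

lemma catw_mult: "1 \<le> j \<Longrightarrow> j \<le> J \<Longrightarrow> cw j * al j = AL'"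
  using alph_dvd_alpha'[of j] by (simp add: catw_def)

lemma catw_0: "cw 0 = 0"
  by (simp add: catw_def)

lemma catw_pred: "2 \<le> j \<Longrightarrow> j \<le> J \<Longrightarrow> cw (j-1) = bw j * al j"
proof -
  assume j: "2 \<le> j" "j \<le> J"
  have "cw (j-1) * al (j-1) = AL'" using catw_mult[of "j-1"] j by simp
  also have "\<dots> = (bw j * al j) * al (j-1)" using blkw_mult[of j] j by (simp add: ac_simps)
  moreover have "1 \<le> al (j-1)" using j by (intro alph_pos) simp
  ultimately show ?thesis by simp
qed

lemma blkw_1: "bw 1 * al 1 = AL'"
  using blkw_mult[of 1] k_le_n by (simp add: alph_def ac_simps)

lemma catw_step: "1 \<le> j \<Longrightarrow> j \<le> J \<Longrightarrow> cw j = cw (j-1) + bw j"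
proof -
  assume j: "1 \<le> j" "j \<le> J"
  have "cw j * al j = al (j-1) * bw j * al j"
    using catw_mult[OF j] blkw_mult[OF j] by (simp add: ac_simps)
  hence cw_j: "cw j = al (j-1) * bw j" using alph_pos[of j] j by simp
  show ?thesis
  proof (cases "j = 1")
    case True
    thus ?thesis using cw_j catw_0 by (simp add: alph_def)
  next
    case False
    thus ?thesis using cw_j catw_pred[of j] alph_pred[of j] j by (simp add: algebra_simps)
  qed
qed

lemma catw_mono: "i \<le> j \<Longrightarrow> j \<le> J \<Longrightarrow> cw i \<le> cw j"
proof (induction j)
  case (Suc j)
  show ?case
  proof (cases "i = Suc j")
    case False
    hence "cw i \<le> cw j" using Suc by simp
    also have "\<dots> \<le> cw (Suc j)" using catw_step[of "Suc j"] Suc by simp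
    finally show ?thesis .
  qed simp
qed simp

lemma catw_last: "cw J = AL"
  using catw_mult[of J] alph_last t_less_k alpha_pos by (simp add: alpha'_def)

lemma sum_blkw: "l \<le> J \<Longrightarrow> (\<Sum>j=1..l. bw j) = cw l"
  by (induction l) (simp_all add: catw_0 catw_step)

lemma download_width:
  assumes "k \<le> \<mu>" "\<mu> \<le> n"
  shows "al (n + 1 - \<mu>) = \<mu> - t" "AL' div (\<mu> - t) = cw (n + 1 - \<mu>)"
  using assms t_less_k by (simp_all add: alph_def catw_def)

lemma rate_eq_capacity:
  assumes "k \<le> \<mu>" "\<mu> \<le> n"
  shows "real AL' / (real \<mu> * real (AL' div (\<mu> - t))) = 1 - real t / real \<mu>"
proof -
  define j where "j = n + 1 - \<mu>"
  have j: "1 \<le> j" "j \<le> J" using assms t_less_k unfolding j_def by auto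
  have prod: "cw j * (\<mu> - t) = AL'" using catw_mult[OF j] download_width[OF assms]
    unfolding j_def by simp
  hence "cw j > 0" using alpha'_pos by (cases "cw j") auto
  moreover have "real AL' = real (cw j) * (real \<mu> - real t)"
    using prod assms t_less_k by (metis of_nat_diff of_nat_mult less_le_trans less_imp_le)
  moreover have "real \<mu> > 0" using assms t_less_k by auto
  ultimately show ?thesis
    using download_width(2)[OF assms] unfolding j_def by (simp add: field_simps)
qed

lemma cat_stable:
  "l' \<le> l \<Longrightarrow> l \<le> J \<Longrightarrow> c \<le> cw l' \<Longrightarrow> cat n k t m i \<rho> l r c = cat n k t m i \<rho> l' r c"
proof (induction l)
  case (Suc l)
  show ?case
  proof (cases "l' = Suc l")
    case False
    hence "l' \<le> l" using Suc by simp
    moreover from this have "c \<le> cw l" using catw_mono[of l' l] Suc by simp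
    ultimately show ?thesis using Suc by simp
  qed simp
qed simp

lemma Mmat_eq_cat:
  "j \<le> J \<Longrightarrow> c \<le> cw j \<Longrightarrow> Mmat n k t m i \<rho> r c = cat n k t m i \<rho> j r c"
  unfolding Mmat_def by (intro cat_stable) auto

lemma Mmat_eq_Mblk:
  assumes "1 \<le> j" "j \<le> J" "cw (j-1) < c" "c \<le> cw j"
  shows "Mmat n k t m i \<rho> r c = Mblk n k t m i \<rho> (cat n k t m i \<rho> (j-1)) j r (c - cw (j-1))"
  using Mmat_eq_cat[of j c] assms by (cases j) auto

lemma Mblk_cong_rand: "\<rho> j = \<rho>' j \<Longrightarrow> Mblk n k t m i \<rho> C j = Mblk n k t m i \<rho>' C j"
  by (cases "j = 1") (simp_all add: Mblk_def fun_eq_iff)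

lemma cat_cong_rand:
  "(\<And>j. 1 \<le> j \<Longrightarrow> j \<le> l \<Longrightarrow> \<rho> j = \<rho>' j) \<Longrightarrow> cat n k t m i \<rho> l = cat n k t m i \<rho>' l"
proof (induction l)
  case (Suc l)
  hence IH: "cat n k t m i \<rho> l = cat n k t m i \<rho>' l" by simp
  have "\<rho> (Suc l) = \<rho>' (Suc l)" using Suc.prems by simp
  thus ?case using Mblk_cong_rand[of \<rho> "Suc l" \<rho>'] by (simp add: IH fun_eq_iff)
qed simp

lemma Mblk_top_indep_rand:
  "r \<le> al j \<Longrightarrow> Mblk n k t m i \<rho> C j r c = Mblk n k t m i \<rho>' C j r c"
  by (cases "j = 1") (simp_all add: Mblk_def)

lemma Eent_index_bounds:
  assumes "1 \<le> c" "c \<le> bw 1" "1 \<le> r" "r \<le> al 1"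
  shows "1 \<le> (c-1) * al 1 + r \<and> (c-1) * al 1 + r \<le> AL'"
proof -
  have "(c-1) * al 1 + r \<le> c * al 1" using assms by (cases c) auto
  also have "\<dots> \<le> bw 1 * al 1" using assms by simp
  finally show ?thesis using assms blkw_1 by simp
qed

lemma cat_in_vecs:
  assumes "\<rho> \<in> rand_space n k t m" "1 \<le> i" "i \<le> m" "l \<le> J"
  shows "cat n k t m i \<rho> l r c \<in> vecs (AL' * m)"
  using assms(4)
proof (induction l arbitrary: r c)
  case (Suc l)
  have "\<rho> j s c \<in> vecs (AL' * m)" for j s c
    using assms(1) by (simp add: rand_space_def)
  moreover have "Eent n t m i r c' \<in> vecs (AL' * m)"
    if "0 < r" "r \<le> al 1" "0 < c'" "c' \<le> bw 1" for r c'
    using file_index_bounds[OF _ _ assms(2,3), of "(c'-1) * al 1 + r" AL']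
      Eent_index_bounds[of c' r] that
    by (auto simp: Eent_def vecs_def ev_def)
  ultimately show ?case
    using Suc zero_in_vecs by (auto simp: Mblk_def catw_0 Suc_le_eq)
qed (simp add: zero_in_vecs)

lemma query_in_vecs:
  assumes "\<rho> \<in> rand_space n k t m" "1 \<le> i" "i \<le> m"
  shows "query n k t m i a \<rho> l c \<in> vecs (AL' * m)"
proof -
  have "Mmat n k t m i \<rho> r c \<in> vecs (AL' * m)" for r
    unfolding Mmat_def by (rule cat_in_vecs[OF assms]) simp
  thus ?thesis by (simp add: vecs_def query_def)
qed

text \<open>Rows \<open>\<alpha>\<^sub>j + 1, \<dots>, \<alpha>\<^sub>j + t\<close> of \<open>M\<^sub>j\<close> hold \<open>\<R>\<^sub>j\<close> and all lower rows vanish.\<close>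
lemma query_split:
  fixes a :: "nat \<Rightarrow> 'a::field"
  assumes j: "1 \<le> j" "j \<le> J" and c': "1 \<le> c'" "c' \<le> bw j"
  shows "query n k t m i a \<rho> l (cw (j-1) + c') p =
    (\<Sum>r=1..al j. a l ^ (r-1) * Mmat n k t m i \<rho> r (cw (j-1) + c') p)
    + a l ^ al j * (\<Sum>s=1..t. a l ^ (s-1) * \<rho> j s c' p)"
proof -
  define c where "c = cw (j-1) + c'"
  define f where "f r = a l ^ (r-1) * Mmat n k t m i \<rho> r c p" for r
  have c: "cw (j-1) < c" "c \<le> cw j" using c' catw_step[OF j] unfolding c_def by auto
  have M: "Mmat n k t m i \<rho> r c = Mblk n k t m i \<rho> (cat n k t m i \<rho> (j-1)) j r c'" for r
    using Mmat_eq_Mblk[OF j c, of m i \<rho> r] unfolding c_def by simp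
  have rows: "al j + t = n + 1 - j" by (rule alph_add_t[OF j])
  have f_low: "f r = 0" if "al j + t < r" "r \<le> n" for r
  proof -
    have "j \<noteq> 1" using that rows by auto
    thus ?thesis unfolding f_def M using that c' by (simp add: Mblk_def)
  qed
  have f_rand: "f (s + al j) = a l ^ al j * (a l ^ (s-1) * \<rho> j s c' p)" if "1 \<le> s" "s \<le> t" for s
  proof -
    have "Mmat n k t m i \<rho> (al j + s) c = \<rho> j s c'"
      unfolding M using that c' rows j by (auto simp: Mblk_def)
    moreover have "s + al j - 1 = al j + (s - 1)" using that by simp
    ultimately show ?thesis unfolding f_def by (simp add: power_add add.commute)
  qed
  have "query n k t m i a \<rho> l c p = (\<Sum>r=1..al j + t. f r) + (\<Sum>r=al j + t + 1..al j + t + (n - (al j + t)). f r)"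
    unfolding query_def f_def using rows j by (subst sum.ub_add_nat[symmetric]) auto
  also have "(\<Sum>r=al j + t + 1..al j + t + (n - (al j + t)). f r) = 0"
    by (intro sum.neutral) (auto intro!: f_low)
  also have "(\<Sum>r=1..al j + t. f r) = (\<Sum>r=1..al j. f r) + (\<Sum>s=1..t. f (s + al j))"
    using sum.ub_add_nat[of 1 "al j" f t] sum.shift_bounds_cl_nat_ivl[of f 1 "al j" t]
    by (simp add: add.commute)
  also have "(\<Sum>s=1..t. f (s + al j)) = a l ^ al j * (\<Sum>s=1..t. a l ^ (s-1) * \<rho> j s c' p)"
    by (simp add: f_rand sum_distrib_left)
  finally show ?thesis unfolding c_def f_def by simp
qed

section \<open>Privacy\<close>

lemma query_determines_rand_block:
  fixes a :: "nat \<Rightarrow> 'a::field"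
  assumes T: "finite T" "card T = t" "inj_on a T" "\<forall>l\<in>T. a l \<noteq> 0"
    and j: "1 \<le> j" "j \<le> J" and c': "1 \<le> c'" "c' \<le> bw j"
    and prev: "cat n k t m i \<rho> (j-1) = cat n k t m i \<rho>' (j-1)"
    and q: "\<forall>l\<in>T. query n k t m i a \<rho> l (cw (j-1) + c') = query n k t m i a \<rho>' l (cw (j-1) + c')"
    and s: "s \<in> {1..t}"
  shows "\<rho> j s c' = \<rho>' j s c'"
proof
  fix p
  define c where "c = cw (j-1) + c'"
  have c: "cw (j-1) < c" "c \<le> cw j" using c' catw_step[OF j] unfolding c_def by auto
  have top: "Mmat n k t m i \<rho> r c = Mmat n k t m i \<rho>' r c" if "r \<le> al j" for r
    unfolding Mmat_eq_Mblk[OF j c, of m i] prev by (rule Mblk_top_indep_rand[OF that])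
  define y where "y s = \<rho> j s c' p - \<rho>' j s c' p" for s
  have "(\<Sum>s=1..t. a l ^ (s-1) * y s) = 0" if l: "l \<in> T" for l
  proof -
    have "query n k t m i a \<rho> l c p = query n k t m i a \<rho>' l c p"
      using q l unfolding c_def by simp
    hence "a l ^ al j * (\<Sum>s=1..t. a l ^ (s-1) * \<rho> j s c' p) =
          a l ^ al j * (\<Sum>s=1..t. a l ^ (s-1) * \<rho>' j s c' p)"
      unfolding c_def query_split[OF j c'] using top unfolding c_def by simp
    hence "(\<Sum>s=1..t. a l ^ (s-1) * \<rho> j s c' p) = (\<Sum>s=1..t. a l ^ (s-1) * \<rho>' j s c' p)"
      using T(4) l by simp
    thus ?thesis unfolding y_def by (simp add: right_diff_distrib sum_subtractf)
  qed
  hence "\<forall>s\<in>{1..t}. y s = 0" by (intro vandermonde_kernel_trivial[OF T(1-3)]) blast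
  thus "\<rho> j s c' p = \<rho>' j s c' p" using s unfolding y_def by simp
qed

lemma inj_on_queries:
  fixes a :: "nat \<Rightarrow> 'a::field"
  assumes T: "finite T" "card T = t" "inj_on a T" "\<forall>l\<in>T. a l \<noteq> 0"
  shows "inj_on (\<lambda>\<rho>. \<lambda>l c. if l \<in> T \<and> c \<in> {1..AL} then query n k t m i a \<rho> l c else (\<lambda>_. 0))
           (rand_space n k t m)"
proof (rule inj_onI)
  fix \<rho> \<rho>' :: "nat \<Rightarrow> nat \<Rightarrow> nat \<Rightarrow> 'a vec"
  assume r: "\<rho> \<in> rand_space n k t m" "\<rho>' \<in> rand_space n k t m"
  assume eq: "(\<lambda>l c. if l \<in> T \<and> c \<in> {1..AL} then query n k t m i a \<rho> l c else (\<lambda>_. 0)) =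
     (\<lambda>l c. if l \<in> T \<and> c \<in> {1..AL} then query n k t m i a \<rho>' l c else (\<lambda>_. 0))"
  have q: "query n k t m i a \<rho> l c = query n k t m i a \<rho>' l c" if "l \<in> T" "1 \<le> c" "c \<le> AL" for l c
    using fun_cong[OF fun_cong[OF eq, of l], of c] that by simp
  have "\<rho> j = \<rho>' j" for j
  proof (induction j rule: less_induct)
    case (less j)
    show ?case
    proof (cases "1 \<le> j \<and> j \<le> J")
      case False
      thus ?thesis using r by (auto simp: rand_space_def fun_eq_iff)
    next
      case True
      hence j: "1 \<le> j" "j \<le> J" by auto
      have prev: "cat n k t m i \<rho> (j-1) = cat n k t m i \<rho>' (j-1)"
        by (rule cat_cong_rand) (use less j in auto)
      have "\<rho> j s c' = \<rho>' j s c'" for s c'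
      proof (cases "s \<in> {1..t} \<and> 1 \<le> c' \<and> c' \<le> bw j")
        case True
        have "cw (j-1) + c' \<le> cw j" using True catw_step[OF j] by simp
        hence "cw (j-1) + c' \<le> AL" using catw_mono[of j J] catw_last j by simp
        thus ?thesis using True q
          by (intro query_determines_rand_block[OF T j _ _ prev]) auto
      qed (use r j in \<open>auto simp: rand_space_def\<close>)
      thus ?thesis by blast
    qed
  qed
  thus "\<rho> = \<rho>'" by blast
qed

definition rand_index :: "(nat \<times> nat \<times> nat) set" where
  "rand_index = Sigma {1..J} (\<lambda>j. {1..t} \<times> {1..bw j})"

lemma card_rand_index: "card rand_index = t * AL"
proof -
  have "card rand_index = (\<Sum>j=1..J. t * bw j)"
    unfolding rand_index_def by (subst card_SigmaI) (auto simp: card_cartesian_product)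
  also have "\<dots> = t * (\<Sum>j=1..J. bw j)" by (rule sum_distrib_left[symmetric])
  also have "\<dots> = t * cw J" using sum_blkw[of J] by simp
  finally show ?thesis using catw_last by simp
qed

lemma rand_space_uncurry:
  "(\<lambda>\<rho>. \<lambda>(j,s,c). \<rho> j s c) ` (rand_space n k t m :: (nat \<Rightarrow> nat \<Rightarrow> nat \<Rightarrow> ('a::zero) vec) set)
   = PiE_dflt rand_index (\<lambda>_. 0) (\<lambda>_. vecs (AL' * m))"
proof (intro equalityI subsetI)
  fix g :: "nat \<times> nat \<times> nat \<Rightarrow> 'a vec"
  assume g: "g \<in> PiE_dflt rand_index (\<lambda>_. 0) (\<lambda>_. vecs (AL' * m))"
  hence "g (j,s,c) \<in> vecs (AL' * m)" for j s c
    using zero_in_vecs by (cases "(j,s,c) \<in> rand_index") (auto simp: PiE_dflt_def)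
  hence "(\<lambda>j s c. g (j,s,c)) \<in> rand_space n k t m"
    using g unfolding PiE_dflt_def rand_space_def rand_index_def by auto
  thus "g \<in> (\<lambda>\<rho>. \<lambda>(j,s,c). \<rho> j s c) ` rand_space n k t m"
    by (rule rev_image_eqI) auto
qed (auto simp: PiE_dflt_def rand_space_def rand_index_def)

lemma card_rand_space:
  "card (rand_space n k t m :: (nat \<Rightarrow> nat \<Rightarrow> nat \<Rightarrow> ('a::{zero,finite}) vec) set)
     = card (vecs (AL' * m) :: 'a vec set) ^ (t * AL)"
proof -
  have "card (rand_space n k t m :: (nat \<Rightarrow> nat \<Rightarrow> nat \<Rightarrow> 'a vec) set)
      = card ((\<lambda>\<rho>. \<lambda>(j,s,c). \<rho> j s c) ` (rand_space n k t m :: (nat \<Rightarrow> nat \<Rightarrow> nat \<Rightarrow> 'a vec) set))"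
    by (rule card_image[symmetric, OF inj_on_subset[OF inj_uncurry3 subset_UNIV]])
  also have "\<dots> = card (vecs (AL' * m) :: 'a vec set) ^ (t * AL)"
    unfolding rand_space_uncurry using card_rand_index
    by (simp add: card_PiE_dflt finite_vecs rand_index_def)
  finally show ?thesis .
qed

text \<open>All query patterns the servers in \<open>T\<close> may receive; for every \<open>i\<close> the queries are uniform on this set.\<close>
definition view_space :: "nat set \<Rightarrow> nat \<Rightarrow> (nat \<Rightarrow> nat \<Rightarrow> ('a::zero) vec) set" where
  "view_space T m = {Q. \<forall>l c. (l \<in> T \<and> c \<in> {1..AL} \<longrightarrow> Q l c \<in> vecs (AL' * m)) \<and>
                     (\<not> (l \<in> T \<and> c \<in> {1..AL}) \<longrightarrow> Q l c = (\<lambda>_. 0))}"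

lemma view_space_uncurry:
  "case_prod ` (view_space T m :: (nat \<Rightarrow> nat \<Rightarrow> ('a::zero) vec) set) =
    PiE_dflt (T \<times> {1..AL}) (\<lambda>_. 0) (\<lambda>_. vecs (AL' * m))"
proof (intro equalityI subsetI)
  fix g :: "nat \<times> nat \<Rightarrow> 'a vec"
  assume "g \<in> PiE_dflt (T \<times> {1..AL}) (\<lambda>_. 0) (\<lambda>_. vecs (AL' * m))"
  hence "curry g \<in> view_space T m" unfolding PiE_dflt_def view_space_def by auto
  thus "g \<in> case_prod ` view_space T m" by (rule rev_image_eqI) simp
qed (auto simp: PiE_dflt_def view_space_def)

lemma finite_view_space:
  assumes "finite T"
  shows "finite (view_space T m :: (nat \<Rightarrow> nat \<Rightarrow> ('a::{zero,finite}) vec) set)"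
proof (rule finite_imageD)
  show "finite (case_prod ` (view_space T m :: (nat \<Rightarrow> nat \<Rightarrow> 'a vec) set))"
    unfolding view_space_uncurry using assms by (intro finite_PiE_dflt finite_vecs) auto
qed (rule inj_on_subset[OF inj_case_prod subset_UNIV])

lemma card_view_space:
  assumes "finite T" "card T = t"
  shows "card (view_space T m :: (nat \<Rightarrow> nat \<Rightarrow> ('a::{zero,finite}) vec) set)
    = card (vecs (AL' * m) :: 'a vec set) ^ (t * AL)"
proof -
  have "card (view_space T m :: (nat \<Rightarrow> nat \<Rightarrow> 'a vec) set)
      = card (case_prod ` (view_space T m :: (nat \<Rightarrow> nat \<Rightarrow> 'a vec) set))"
    by (rule card_image[symmetric, OF inj_on_subset[OF inj_case_prod subset_UNIV]])
  also have "\<dots> = card (vecs (AL' * m) :: 'a vec set) ^ (t * AL)"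
    unfolding view_space_uncurry using assms
    by (simp add: card_PiE_dflt finite_vecs card_cartesian_product)
  finally show ?thesis .
qed

lemma queries_uniform:
  fixes a :: "nat \<Rightarrow> 'a::{finite,field}"
  assumes T: "T \<subseteq> {1..n}" "card T = t" and a: "inj_on a {1..n}" "\<forall>l\<in>{1..n}. a l \<noteq> 0"
    and i: "1 \<le> i" "i \<le> m"
  shows "map_pmf (\<lambda>\<rho>. \<lambda>l c. if l \<in> T \<and> c \<in> {1..AL} then query n k t m i a \<rho> l c else (\<lambda>_. 0))
           (pmf_of_set (rand_space n k t m)) = pmf_of_set (view_space T m)"
proof (rule map_pmf_of_set_inj_onto)
  have "finite T" using T finite_subset by blast
  thus "inj_on (\<lambda>\<rho>. \<lambda>l c. if l \<in> T \<and> c \<in> {1..AL} then query n k t m i a \<rho> l c else (\<lambda>_. 0))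
           (rand_space n k t m)"
    using T a by (intro inj_on_queries) (auto intro: inj_on_subset)
  show "finite (view_space T m :: (nat \<Rightarrow> nat \<Rightarrow> 'a vec) set)"
    by (rule finite_view_space[OF \<open>finite T\<close>])
  show "card (rand_space n k t m :: (nat \<Rightarrow> nat \<Rightarrow> nat \<Rightarrow> 'a vec) set) = card (view_space T m :: (nat \<Rightarrow> nat \<Rightarrow> 'a vec) set)"
    using card_view_space[OF \<open>finite T\<close> T(2), where m=m and 'a='a] card_rand_space[where m=m and 'a='a]
    by simp
  have "(\<lambda>_ _ _. (\<lambda>_. 0)) \<in> rand_space n k t m" by (simp add: rand_space_def zero_in_vecs)
  thus "(rand_space n k t m :: (nat \<Rightarrow> nat \<Rightarrow> nat \<Rightarrow> 'a vec) set) \<noteq> {}" by blast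
qed (use query_in_vecs i in \<open>auto simp: view_space_def\<close>)

section \<open>Decoding\<close>

lemma Mmat_below_staircase_zero:
  assumes b: "1 \<le> b" "b \<le> J" and c: "cw (b-1) < c" "c \<le> cw b"
    and r: "n + 1 - b < r" "r \<le> n"
  shows "Mmat n k t m i \<rho> r c = (\<lambda>_. 0)"
proof -
  have "b \<noteq> 1" using r by auto
  thus ?thesis unfolding Mmat_eq_Mblk[OF b c] using r alph_add_t[OF b] by (simp add: Mblk_def)
qed

text \<open>Row \<open>n + 2 - b'\<close> of \<open>[M\<^sub>1 \<dots> M\<^sub>b\<^sub>'\<^sub>-\<^sub>1]\<close> is the matrix \<open>\<D>\<^sub>b\<^sub>'\<^sub>-\<^sub>1\<close> on top of \<open>M\<^sub>b\<^sub>'\<close>.\<close>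
lemma Mmat_copied_into_block:
  assumes b: "1 \<le> b" "b < b'" "b' \<le> J" and c: "cw (b-1) < c" "c \<le> cw b"
  obtains r' c' where "1 \<le> r'" "r' \<le> al b'" "cw (b'-1) < c'" "c' \<le> cw b'"
    "Mmat n k t m i \<rho> (n + 2 - b') c = Mmat n k t m i \<rho> r' c'"
proof -
  have b': "1 \<le> b'" "b' \<le> J" "2 \<le> b'" using b by auto
  have al_b': "1 \<le> al b'" using alph_pos b' by simp
  define c'' where "c'' = (c-1) div al b' + 1"
  define r' where "r' = (c-1) mod al b' + 1"
  have c_eq: "(c''-1) * al b' + r' = c"
    using div_mult_mod_eq[of "c-1" "al b'"] c unfolding c''_def r'_def by simp
  have r': "1 \<le> r'" "r' \<le> al b'" using al_b' unfolding r'_def by (auto simp: Suc_le_eq)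
  have "cw b \<le> cw (b'-1)" by (rule catw_mono) (use b in auto)
  hence c_le: "c \<le> cw (b'-1)" using c by linarith
  have c'': "1 \<le> c''" "c'' \<le> bw b'"
  proof -
    have "c - 1 < bw b' * al b'" using c_le catw_pred[OF b'(3,2)] c by (cases c) auto
    hence "(c-1) div al b' < bw b'" using al_b' by (simp add: div_less_iff_less_mult)
    thus "c'' \<le> bw b'" unfolding c''_def by simp
  qed (simp add: c''_def)
  define c' where "c' = cw (b'-1) + c''"
  have c': "cw (b'-1) < c'" "c' \<le> cw b'" using c'' catw_step[OF b'(1,2)] unfolding c'_def by auto
  have "Mmat n k t m i \<rho> r' c' = Mblk n k t m i \<rho> (cat n k t m i \<rho> (b'-1)) b' r' c''"
    using Mmat_eq_Mblk[OF b'(1,2) c'] unfolding c'_def by simp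
  also have "\<dots> = cat n k t m i \<rho> (b'-1) (n + 2 - b') c"
    using b' r' c'' alph_add_t[OF b'(1,2)] c_eq by (simp add: Mblk_def)
  also have "\<dots> = Mmat n k t m i \<rho> (n + 2 - b') c"
    by (rule Mmat_eq_cat[symmetric]) (use c_le b' in auto)
  finally show ?thesis using that r' c' by simp
qed

lemma answer_expand:
  fixes a :: "nat \<Rightarrow> 'a::field"
  shows "answer n k t m i a \<rho> l c x =
    (\<Sum>r=1..n. a l ^ (r-1) * (\<Sum>p=1..AL' * m. Mmat n k t m i \<rho> r c p * x p))"
  unfolding answer_def query_def
  by (simp add: sum_distrib_left sum_distrib_right mult.assoc) (rule sum.swap)

lemma back_substitution:
  fixes a :: "nat \<Rightarrow> 'a::field"
  assumes mu: "k \<le> \<mu>" "\<mu> \<le> n" and L: "L \<subseteq> {1..n}" "card L = \<mu>" and a: "inj_on a {1..n}"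
    and b: "1 \<le> b" "b \<le> n + 1 - \<mu>" and c: "cw (b-1) < c" "c \<le> cw b"
    and ans: "\<forall>l\<in>L. \<forall>c\<in>{1..cw (n+1-\<mu>)}. answer n k t m i a \<rho> l c z = 0"
    and r: "r \<in> {1..n}"
  shows "(\<Sum>p=1..AL' * m. Mmat n k t m i \<rho> r c p * z p) = 0"
  using b c r
proof (induction "n + 1 - \<mu> - b" arbitrary: b c r rule: less_induct)
  case less
  define d where "d r = (\<Sum>p=1..AL' * m. Mmat n k t m i \<rho> r c p * z p)" for r
  have b: "1 \<le> b" "b \<le> J" using less mu by auto
  have low: "d r = 0" if r: "\<mu> < r" "r \<le> n" for r
  proof (cases "n + 1 - b < r")
    case True
    thus ?thesis unfolding d_def
      using Mmat_below_staircase_zero[OF b less(4,5) True r(2), where m=m and i=i and \<rho>=\<rho>] by simp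
  next
    case False
    define b' where "b' = n + 2 - r"
    have b': "b < b'" "b' \<le> n + 1 - \<mu>" using False r mu unfolding b'_def by auto
    have "b' \<le> J" using b' mu t_less_k by auto
    obtain r' c' where "1 \<le> r'" "r' \<le> al b'" "cw (b'-1) < c'" "c' \<le> cw b'"
      and copy: "Mmat n k t m i \<rho> (n + 2 - b') c = Mmat n k t m i \<rho> r' c'"
      by (rule Mmat_copied_into_block[OF b(1) b'(1) \<open>b' \<le> J\<close> less(4,5)])
    have "r' \<le> n" using \<open>r' \<le> al b'\<close> alph_add_t[OF _ \<open>b' \<le> J\<close>] b' b by simp
    have "(\<Sum>p=1..AL' * m. Mmat n k t m i \<rho> r' c' p * z p) = 0"
      by (rule less(1)[of b']) (use b' b \<open>1 \<le> r'\<close> \<open>r' \<le> n\<close> \<open>cw (b'-1) < c'\<close> \<open>c' \<le> cw b'\<close> in auto)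
    moreover have "n + 2 - b' = r" using r mu unfolding b'_def by auto
    ultimately show ?thesis unfolding d_def using copy by simp
  qed
  have "cw b \<le> cw (n+1-\<mu>)" using less(3) mu by (intro catw_mono) auto
  hence "\<forall>l\<in>L. (\<Sum>r=1..n. a l ^ (r-1) * d r) = 0"
    using ans less(4,5) unfolding d_def answer_expand by auto
  hence "\<forall>r\<in>{1..n}. d r = 0"
    using L a mu low by (intro vandermonde_kernel_trivial_below) (auto intro: finite_subset inj_on_subset)
  thus ?case using less(6) unfolding d_def by blast
qed

lemma file_symbol_in_Mmat:
  assumes "1 \<le> q" "q \<le> AL'"
  obtains r c where "r \<in> {1..n}" "c \<in> {1..cw 1}" "Mmat n k t m i \<rho> r c = ev ((q-1)*m + i)"
proof -
  have al_1: "1 \<le> al 1" using alph_pos[of 1] by simp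
  define c where "c = (q-1) div al 1 + 1"
  define r where "r = (q-1) mod al 1 + 1"
  have q_eq: "(c-1) * al 1 + r = q"
    using div_mult_mod_eq[of "q-1" "al 1"] assms unfolding c_def r_def by simp
  have "(q-1) mod al 1 < al 1" using al_1 by simp
  hence r: "1 \<le> r" "r \<le> al 1" "r \<le> n"
    using alph_add_t[of 1] t_pos unfolding r_def by auto
  have "q - 1 < bw 1 * al 1" using blkw_1 assms by simp
  hence "(q-1) div al 1 < bw 1" using al_1 by (simp add: div_less_iff_less_mult)
  hence c: "1 \<le> c" "c \<le> cw 1" using catw_step[of 1] catw_0 unfolding c_def by auto
  have "Mmat n k t m i \<rho> r c = Mblk n k t m i \<rho> (cat n k t m i \<rho> 0) 1 r c"
    using Mmat_eq_Mblk[of 1 c] c catw_0 by simp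
  also have "\<dots> = ev ((q-1)*m + i)"
    using r c catw_step[of 1] catw_0 q_eq by (simp add: Mblk_def Eent_def)
  finally show ?thesis using that r c by simp
qed

lemma decodable:
  fixes a :: "nat \<Rightarrow> 'a::field"
  assumes mu: "k \<le> \<mu>" "\<mu> \<le> n" and L: "L \<subseteq> {1..n}" "card L = \<mu>" and a: "inj_on a {1..n}"
    and i: "1 \<le> i" "i \<le> m"
  shows "\<exists>dec :: (nat \<Rightarrow> nat \<Rightarrow> 'a) \<Rightarrow> (nat \<Rightarrow> 'a).
          \<forall>x \<in> vecs (AL' * m).
            dec (\<lambda>l c. if l \<in> L \<and> c \<in> {1..cw (n+1-\<mu>)}
                        then answer n k t m i a \<rho> l c x else 0)
            = (\<lambda>j. if j \<in> {1..AL'} then x ((j - 1) * m + i) else 0)"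
proof (rule ex_decoder_on)
  fix x x' :: "nat \<Rightarrow> 'a"
  assume "(\<lambda>l c. if l \<in> L \<and> c \<in> {1..cw (n+1-\<mu>)} then answer n k t m i a \<rho> l c x else 0) =
          (\<lambda>l c. if l \<in> L \<and> c \<in> {1..cw (n+1-\<mu>)} then answer n k t m i a \<rho> l c x' else 0)"
  hence "answer n k t m i a \<rho> l c x = answer n k t m i a \<rho> l c x'"
    if "l \<in> L" "c \<in> {1..cw (n+1-\<mu>)}" for l c
    using that by (metis (no_types, lifting))
  hence ans: "\<forall>l\<in>L. \<forall>c\<in>{1..cw (n+1-\<mu>)}. answer n k t m i a \<rho> l c (\<lambda>p. x p - x' p) = 0"
    by (simp add: answer_def right_diff_distrib sum_subtractf)
  have "x ((q-1)*m + i) = x' ((q-1)*m + i)" if q: "1 \<le> q" "q \<le> AL'" for q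
  proof -
    obtain r c where rc: "r \<in> {1..n}" "c \<in> {1..cw 1}" "Mmat n k t m i \<rho> r c = ev ((q-1)*m + i)"
      using file_symbol_in_Mmat[OF q] .
    have "(\<Sum>p=1..AL' * m. Mmat n k t m i \<rho> r c p * (x p - x' p)) = 0"
      using back_substitution[OF mu L a _ _ _ _ ans rc(1), of 1 c] rc(2) mu t_less_k catw_0
      by auto
    thus ?thesis
      using rc(3) file_index_bounds[OF q i] sum_ev_mult[of "(q-1)*m + i" "{1..AL'*m}" "\<lambda>p. x p - x' p"]
      by simp
  qed
  thus "(\<lambda>j. if j \<in> {1..AL'} then x ((j - 1) * m + i) else 0) =
        (\<lambda>j. if j \<in> {1..AL'} then x' ((j - 1) * m + i) else 0)" by auto
qed

end

theorem theorem1: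
  fixes n k t m :: nat and a :: "nat \<Rightarrow> 'a::{finite,field}"
  assumes "1 \<le> t" and "t < k" and "k \<le> n" and "1 \<le> m"
    and "n < CARD('a)"
    and "inj_on a {1..n}" and "\<forall>l\<in>{1..n}. a l \<noteq> 0"
  shows
    "(\<forall>T i i'. T \<subseteq> {1..n} \<and> card T = t \<and> i \<in> {1..m} \<and> i' \<in> {1..m} \<longrightarrow>
        map_pmf (\<lambda>\<rho>. \<lambda>l c. if l \<in> T \<and> c \<in> {1..alpha n k t} then query n k t m i a \<rho> l c else (\<lambda>_. 0))
                (pmf_of_set (rand_space n k t m))
      = map_pmf (\<lambda>\<rho>. \<lambda>l c. if l \<in> T \<and> c \<in> {1..alpha n k t} then query n k t m i' a \<rho> l c else (\<lambda>_. 0))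
                (pmf_of_set (rand_space n k t m)))
   \<and>
    (\<forall>\<mu> L i \<rho>. k \<le> \<mu> \<and> \<mu> \<le> n \<and> L \<subseteq> {1..n} \<and> card L = \<mu> \<and> i \<in> {1..m}
        \<and> \<rho> \<in> rand_space n k t m \<longrightarrow>
       (\<mu> - t) dvd alpha' n k t \<and> alpha' n k t div (\<mu> - t) \<le> alpha n k t \<and>
       (\<exists>dec :: (nat \<Rightarrow> nat \<Rightarrow> 'a) \<Rightarrow> (nat \<Rightarrow> 'a).
          \<forall>x \<in> vecs (alpha' n k t * m).
            dec (\<lambda>l c. if l \<in> L \<and> c \<in> {1..alpha' n k t div (\<mu> - t)}
                        then answer n k t m i a \<rho> l c x else 0)
            = (\<lambda>j. if j \<in> {1..alpha' n k t} then x ((j - 1) * m + i) else 0)) \<and>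
       real (alpha' n k t) / (real \<mu> * real (alpha' n k t div (\<mu> - t))) = 1 - real t / real \<mu>)"
proof -
  \<comment> \<open>\<open>n < CARD('a)\<close> only ensures that an injective \<open>a\<close> exists.\<close>
  interpret staircase n k t using assms by unfold_locales auto
  show ?thesis
  proof (intro conjI allI impI)
    fix T i i' assume "T \<subseteq> {1..n} \<and> card T = t \<and> i \<in> {1..m} \<and> i' \<in> {1..m}"
    thus "map_pmf (\<lambda>\<rho>. \<lambda>l c. if l \<in> T \<and> c \<in> {1..AL} then query n k t m i a \<rho> l c else (\<lambda>_. 0))
                (pmf_of_set (rand_space n k t m))
      = map_pmf (\<lambda>\<rho>. \<lambda>l c. if l \<in> T \<and> c \<in> {1..AL} then query n k t m i' a \<rho> l c else (\<lambda>_. 0))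
                (pmf_of_set (rand_space n k t m))"
      using queries_uniform[of T a i m] queries_uniform[of T a i' m] assms by auto
  next
    fix \<mu> L i and \<rho> :: "nat \<Rightarrow> nat \<Rightarrow> nat \<Rightarrow> 'a vec"
    assume h: "k \<le> \<mu> \<and> \<mu> \<le> n \<and> L \<subseteq> {1..n} \<and> card L = \<mu> \<and> i \<in> {1..m} \<and> \<rho> \<in> rand_space n k t m"
    hence mu: "k \<le> \<mu>" "\<mu> \<le> n" and j: "n + 1 - \<mu> \<le> J" using assms by auto
    show "(\<mu> - t) dvd AL'"
      using alph_dvd_alpha'[OF j] download_width(1)[OF mu] by simp
    show "AL' div (\<mu> - t) \<le> AL"
      using download_width(2)[OF mu] catw_mono[OF j] catw_last by simp
    show "\<exists>dec :: (nat \<Rightarrow> nat \<Rightarrow> 'a) \<Rightarrow> (nat \<Rightarrow> 'a). \<forall>x \<in> vecs (AL' * m).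
            dec (\<lambda>l c. if l \<in> L \<and> c \<in> {1..AL' div (\<mu> - t)} then answer n k t m i a \<rho> l c x else 0)
            = (\<lambda>j. if j \<in> {1..AL'} then x ((j - 1) * m + i) else 0)"
      unfolding download_width(2)[OF mu] using decodable[OF mu _ _ assms(6)] h by auto
    show "real AL' / (real \<mu> * real (AL' div (\<mu> - t))) = 1 - real t / real \<mu>"
      by (rule rate_eq_capacity[OF mu])
  qed
qed

end
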